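(* Let $k\ge1$ be an integer and $x\ge p_k$. For every $y\ge x$, the interval $(\eta_k(x)y,\,y]$ contains at least $k$ primes; and $\eta_k(x)$ is the largest real $\lambda$ such that $(\lambda y,y]$ contains at least $k$ primes for every $y\ge x$.
   Context: $p_i$ denotes the $i$-th prime. For $x\ge p_k$, $\eta_k(x)=\min\{p_{i-k}/p_i:\ p_i>x\}$. *)

theory Defs
  imports Complex_Main "HOL-Computational_Algebra.Primes" "HOL-Library.Infinite_Set"
begin

text \<open>The i-th prime, 1-indexed: nth_prime 1 = 2, nth_prime 2 = 3, ...\<close>
definition nth_prime :: "nat \<Rightarrow> nat" where
  "nth_prime i = enumerate {p::nat. prime p} (i - 1)"

definition eta :: "nat \<Rightarrow> real \<Rightarrow> real" where
  "eta k x = Inf {real (nth_prime (i - k)) / real (nth_prime i) | i. i \<ge> 1 \<and> real (nth_prime i) > x}"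

end

theory Submission
  imports Defs
begin

text \<open>Write \<open>q 0 < q 1 < \<dots>\<close> for the primes (so \<open>p\<^sub>i = q (i - 1)\<close>). If \<open>q m \<le> y < q (m + 1)\<close>, the
  interval \<open>(\<lambda> y, y]\<close> contains the \<open>k\<close> primes \<open>q (m + 1 - k), \<dots>, q m\<close> as soon as
  \<open>\<lambda> y < q (m + 1 - k)\<close>; for \<open>\<lambda> = \<eta>\<^sub>k(x)\<close> this holds because \<open>q (m + 1 - k) / q (m + 1)\<close> is one of
  the ratios minimised in \<open>\<eta>\<^sub>k(x)\<close>. Conversely, if \<open>\<lambda>\<close> exceeds some ratio \<open>q (j - k) / q j\<close> with
  \<open>q j > x\<close>, then for \<open>y < q j\<close> close enough to \<open>q j\<close> we have \<open>\<lambda> y \<ge> q (j - k)\<close>, so only the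
  \<open>k - 1\<close> primes strictly between \<open>q (j - k)\<close> and \<open>q j\<close> can lie in \<open>(\<lambda> y, y]\<close>.\<close>

abbreviation prime_enum :: "nat \<Rightarrow> nat" where
  "prime_enum \<equiv> enumerate {p. prime p}"

definition primes_in :: "real \<Rightarrow> real \<Rightarrow> nat set" where
  "primes_in a b = {q. prime q \<and> a < real q \<and> real q \<le> b}"

lemma infinite_primes_nat: "infinite {p::nat. prime p}"
  using primes_infinite by simp

lemma prime_prime_enum: "prime (prime_enum n)"
  using enumerate_in_set[OF infinite_primes_nat] by simp

lemma prime_enum_less_iff [simp]: "prime_enum m < prime_enum n \<longleftrightarrow> m < n"
  using enumerate_mono_iff[OF infinite_primes_nat] by simp

lemma prime_enum_le_iff [simp]: "prime_enum m \<le> prime_enum n \<longleftrightarrow> m \<le> n"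
  using enumerate_mono_le_iff[OF infinite_primes_nat] by simp

lemma inj_prime_enum: "inj prime_enum"
  by (rule injI) (metis prime_enum_le_iff order_antisym order_refl)

lemma index_le_prime_enum: "n \<le> prime_enum n"
  using le_enumerate[OF infinite_primes_nat] by simp

lemma prime_enum_pos: "0 < prime_enum n"
  using prime_gt_0_nat[OF prime_prime_enum] .

lemma prime_in_range_prime_enum: "prime q \<Longrightarrow> q \<in> range prime_enum"
  using enumerate_Ex[OF infinite_primes_nat] by auto

lemma nth_prime_eq_prime_enum: "nth_prime i = prime_enum (i - 1)"
  by (simp add: nth_prime_def)

lemma prime_enum_exceeds: "\<exists>j. x < real (prime_enum j)"
proof
  have "real (nat \<lceil>x\<rceil> + 1) \<le> real (prime_enum (nat \<lceil>x\<rceil> + 1))"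
    using index_le_prime_enum by (simp only: of_nat_le_iff)
  then show "x < real (prime_enum (nat \<lceil>x\<rceil> + 1))"
    using real_nat_ceiling_ge[of x] by simp
qed

lemma prime_enum_bracket:
  assumes "real (prime_enum 0) \<le> y"
  obtains m where "real (prime_enum m) \<le> y" "y < real (prime_enum (Suc m))"
proof -
  define n where "n = (LEAST n. y < real (prime_enum n))"
  have above: "y < real (prime_enum n)"
    unfolding n_def using prime_enum_exceeds by (rule LeastI_ex)
  have "n \<noteq> 0"
  proof
    assume "n = 0"
    with above have "y < real (prime_enum 0)" by simp
    with assms show False by linarith
  qed
  then have "\<not> y < real (prime_enum (n - 1))"
    unfolding n_def by (intro not_less_Least) (simp add: n_def)
  with above \<open>n \<noteq> 0\<close> show thesis
    by (intro that[of "n - 1"]) auto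
qed

lemma finite_primes_in: "finite (primes_in a b)"
  by (rule finite_subset[of _ "{..nat \<lceil>b\<rceil>}"]) (auto simp: primes_in_def, linarith)

lemma card_primes_in_ge:
  assumes "k \<le> Suc m" "a < real (prime_enum (Suc m - k))" "real (prime_enum m) \<le> b"
  shows "k \<le> card (primes_in a b)"
proof -
  have "prime_enum ` {Suc m - k..m} \<subseteq> primes_in a b"
  proof
    fix q assume "q \<in> prime_enum ` {Suc m - k..m}"
    then obtain n where n: "Suc m - k \<le> n" "n \<le> m" "q = prime_enum n" by auto
    have "real (prime_enum (Suc m - k)) \<le> real (prime_enum n)" "real (prime_enum n) \<le> real (prime_enum m)"
      using n(1,2) by simp_all
    with assms(2,3) have "a < real q" "real q \<le> b"
      unfolding n(3) by linarith+
    then show "q \<in> primes_in a b"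
      unfolding primes_in_def using n(3) prime_prime_enum by blast
  qed
  moreover have "card (prime_enum ` {Suc m - k..m}) = k"
    using card_image[OF inj_on_subset[OF inj_prime_enum]] assms(1) by simp
  ultimately show ?thesis
    using card_mono[OF finite_primes_in] by metis
qed

lemma card_primes_in_less:
  assumes "1 \<le> k" "real (prime_enum (j - k)) \<le> a" "b < real (prime_enum j)"
  shows "card (primes_in a b) < k"
proof -
  have "primes_in a b \<subseteq> prime_enum ` {Suc (j - k)..<j}"
  proof
    fix q assume "q \<in> primes_in a b"
    then have q: "prime q" "a < real q" "real q \<le> b" by (auto simp: primes_in_def)
    then obtain n where n: "q = prime_enum n" using prime_in_range_prime_enum by blast
    have "prime_enum (j - k) < prime_enum n" "prime_enum n < prime_enum j"
      using q assms(2,3) n by linarith+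
    then show "q \<in> prime_enum ` {Suc (j - k)..<j}" using n by auto
  qed
  then have "card (primes_in a b) \<le> card (prime_enum ` {Suc (j - k)..<j})"
    by (rule card_mono[rotated]) simp
  also have "\<dots> \<le> card {Suc (j - k)..<j}" by (rule card_image_le) simp
  also have "\<dots> < k" using assms(1) by simp
  finally show ?thesis .
qed

lemma eta_le_ratio:
  assumes "x < real (prime_enum j)"
  shows "eta k x \<le> real (prime_enum (j - k)) / real (prime_enum j)"
proof -
  have "real (prime_enum (j - k)) / real (prime_enum j)
          \<in> {real (nth_prime (i - k)) / real (nth_prime i) | i. i \<ge> 1 \<and> real (nth_prime i) > x}"
    using assms by (intro CollectI exI[of _ "Suc j"]) (simp add: nth_prime_eq_prime_enum)
  then show ?thesis unfolding eta_def
    by (rule cInf_lower) (intro bdd_belowI[of _ 0], auto)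
qed

lemma eta_nonneg: "0 \<le> eta k x"
proof -
  obtain j where "x < real (prime_enum j)"
    using prime_enum_exceeds by blast
  then show ?thesis unfolding eta_def
    by (intro cInf_greatest) (auto intro!: exI[of _ "Suc j"] simp: nth_prime_eq_prime_enum)
qed

lemma eta_less_obtains_ratio:
  assumes "eta k x < lam"
  obtains j where "x < real (prime_enum j)" "real (prime_enum (j - k)) / real (prime_enum j) < lam"
proof -
  obtain j where "x < real (prime_enum j)"
    using prime_enum_exceeds by blast
  then have "{real (nth_prime (i - k)) / real (nth_prime i) | i. i \<ge> 1 \<and> real (nth_prime i) > x} \<noteq> {}"
    by (auto intro!: exI[of _ "Suc j"] simp: nth_prime_eq_prime_enum)
  from cInf_lessD[OF this assms[unfolded eta_def]] obtain i where
    "i \<ge> 1" "x < real (nth_prime i)" "real (nth_prime (i - k)) / real (nth_prime i) < lam"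
    by blast
  then show thesis
    by (intro that[of "i - 1"]) (simp_all add: nth_prime_eq_prime_enum diff_commute)
qed

lemma card_primes_in_eta_ge:
  assumes "real (nth_prime k) \<le> x" "x \<le> y"
  shows "k \<le> card (primes_in (eta k x * y) y)"
proof -
  have x_ge: "real (prime_enum (k - 1)) \<le> x"
    using assms(1) by (simp add: nth_prime_eq_prime_enum)
  have "real (prime_enum 0) \<le> real (prime_enum (k - 1))" by simp
  with x_ge assms(2) have "real (prime_enum 0) \<le> y" by linarith
  then obtain m where m: "real (prime_enum m) \<le> y" "y < real (prime_enum (Suc m))"
    by (rule prime_enum_bracket)
  with x_ge assms(2) have "real (prime_enum (k - 1)) < real (prime_enum (Suc m))"
    by linarith
  then have "k \<le> Suc m" by simp
  have "0 < y" using x_ge assms(2) prime_enum_pos[of "k - 1"] by linarith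
  have "eta k x \<le> real (prime_enum (Suc m - k)) / real (prime_enum (Suc m))"
    using m(2) assms(2) by (intro eta_le_ratio) linarith
  then have "eta k x * y \<le> real (prime_enum (Suc m - k)) / real (prime_enum (Suc m)) * y"
    using \<open>0 < y\<close> by (intro mult_right_mono) simp_all
  also have "\<dots> < real (prime_enum (Suc m - k))"
    using m(2) \<open>0 < y\<close> prime_enum_pos[of "Suc m - k"] by (simp add: divide_less_eq)
  finally show ?thesis using card_primes_in_ge \<open>k \<le> Suc m\<close> m(1) by blast
qed

lemma le_eta_if_card_primes_in_ge:
  assumes "1 \<le> k" and enough: "\<And>y. x \<le> y \<Longrightarrow> k \<le> card (primes_in (lam * y) y)"
  shows "lam \<le> eta k x"
proof (rule ccontr)
  assume "\<not> lam \<le> eta k x"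
  then have "eta k x < lam" by simp
  then have "0 < lam" using eta_nonneg[of k x] by linarith
  obtain j where j: "x < real (prime_enum j)" "real (prime_enum (j - k)) / real (prime_enum j) < lam"
    using \<open>eta k x < lam\<close> by (rule eta_less_obtains_ratio)
  have "real (prime_enum (j - k)) / lam < real (prime_enum j)"
    using j(2) \<open>0 < lam\<close> prime_enum_pos[of j] by (simp add: divide_less_eq mult.commute)
  define y where "y = max x (max (real (prime_enum (j - k)) / lam) (real (prime_enum j) - 1/2))"
  have "y < real (prime_enum j)"
    using j(1) \<open>real (prime_enum (j - k)) / lam < _\<close> by (simp add: y_def)
  moreover have "real (prime_enum (j - k)) \<le> lam * y"
  proof -
    have "real (prime_enum (j - k)) / lam \<le> y" by (simp add: y_def)
    with \<open>0 < lam\<close> show ?thesis by (simp add: pos_divide_le_eq mult.commute)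
  qed
  ultimately have "card (primes_in (lam * y) y) < k"
    using card_primes_in_less assms(1) by blast
  moreover have "x \<le> y" by (simp add: y_def)
  ultimately show False using enough by (meson not_le)
qed

theorem mainTheorem11:
  fixes k :: nat and x :: real
  assumes "k \<ge> 1" and "x \<ge> real (nth_prime k)"
  shows "(\<forall>y::real. y \<ge> x \<longrightarrow>
            card {q::nat. prime q \<and> eta k x * y < real q \<and> real q \<le> y} \<ge> k)
       \<and> (\<forall>lam::real. (\<forall>y::real. y \<ge> x \<longrightarrow>
            card {q::nat. prime q \<and> lam * y < real q \<and> real q \<le> y} \<ge> k)
            \<longrightarrow> lam \<le> eta k x)"
  using card_primes_in_eta_ge[OF assms(2)] le_eta_if_card_primes_in_ge[OF assms(1)]
  unfolding primes_in_def by blast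

end
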